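(* Let $1\le p<\infty$ and let $\boldsymbol{w(k)}=(w_n(k))_{n\in\mathbb{N}}$, $k\in\mathbb{N}$, be countably many weights such that each $B_{\boldsymbol{w(k)}}$ is a continuous frequently hypercyclic operator on the complex Banach space $\ell_p$. Assume that $\bigcap_{k\ge1}FHC(B_{\boldsymbol{w(k)}})\neq\emptyset$. Then for all $i,j\ge1$ with $i\ne j$ and for every $0<\varepsilon<1$, there exist increasing sequences $(m_{i,j,l})_{l\in\mathbb{N}}$, $(n_{i,j,l})_{l\in\mathbb{N}}$ of positive integers tending to infinity, with $\liminf_{l\to\infty}n_{i,j,l}/m_{i,j,l}>0$ and $\limsup_{l\to\infty}n_{i,j,l}/m_{i,j,l}<\varepsilon$, such that \[ \sum_{l\ge1}\frac{|W_{m_{i,j,l}}(i)|^p}{|W_{m_{i,j,l}}(j)|^p\,|W_{m_{i,j,l}-n_{i,j,l}}(i)|^p}<\infty . \]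
   Context: $\ell_p$ is the space of complex sequences $(x_n)_{n\ge0}$ with finite $\|x\|_p$, unit vectors $(e_n)_{n\ge0}$. A weight is a bounded sequence of nonzero complex numbers; $B_{\boldsymbol w}e_0=0$, $B_{\boldsymbol w}e_n=w_ne_{n-1}$. $W_n(k)=w_1(k)\cdots w_n(k)$, $W_0(k)=1$. $FHC(T)$ is the set of vectors $x$ such that for every nonempty open $U$, $\{n:T^nx\in U\}$ has positive lower density; $T$ is frequently hypercyclic if $FHC(T)\ne\emptyset$. *)

theory Defs
  imports "HOL-Analysis.Analysis" "HOL-Library.Liminf_Limsup"
begin

definition lp :: "real \<Rightarrow> (nat \<Rightarrow> complex) set" where
  "lp p = {x. summable (\<lambda>n. norm (x n) powr p)}"

definition lp_norm :: "real \<Rightarrow> (nat \<Rightarrow> complex) \<Rightarrow> real" where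
  "lp_norm p x = (\<Sum>n. norm (x n) powr p) powr (1 / p)"

definition lp_dist :: "real \<Rightarrow> (nat \<Rightarrow> complex) \<Rightarrow> (nat \<Rightarrow> complex) \<Rightarrow> real" where
  "lp_dist p x y = lp_norm p (\<lambda>n. x n - y n)"

definition lp_open :: "real \<Rightarrow> (nat \<Rightarrow> complex) set \<Rightarrow> bool" where
  "lp_open p U \<longleftrightarrow> U \<subseteq> lp p \<and>
     (\<forall>x\<in>U. \<exists>e>0. \<forall>y\<in>lp p. lp_dist p x y < e \<longrightarrow> y \<in> U)"

text \<open>A weight: bounded sequence of nonzero complex numbers (indices n >= 1 matter).\<close>
definition is_weight :: "(nat \<Rightarrow> complex) \<Rightarrow> bool" where
  "is_weight w \<longleftrightarrow> (\<forall>n\<ge>1. w n \<noteq> 0) \<and> (\<exists>C. \<forall>n\<ge>1. norm (w n) \<le> C)"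

text \<open>Weighted backward shift: B e_0 = 0, B e_n = w_n e_(n-1), i.e. (Bx)_n = w_(n+1) x_(n+1).\<close>
definition bshift :: "(nat \<Rightarrow> complex) \<Rightarrow> (nat \<Rightarrow> complex) \<Rightarrow> (nat \<Rightarrow> complex)" where
  "bshift w x = (\<lambda>n. w (Suc n) * x (Suc n))"

definition Wprod :: "(nat \<Rightarrow> complex) \<Rightarrow> nat \<Rightarrow> complex" where
  "Wprod w n = (\<Prod>i\<in>{1..n}. w i)"

definition lower_density :: "nat set \<Rightarrow> ereal" where
  "lower_density A = liminf (\<lambda>N. ereal (real (card (A \<inter> {..<N})) / real N))"

definition FHC :: "real \<Rightarrow> ((nat \<Rightarrow> complex) \<Rightarrow> (nat \<Rightarrow> complex)) \<Rightarrow> (nat \<Rightarrow> complex) set" where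
  "FHC p T = {x \<in> lp p. \<forall>U. lp_open p U \<and> U \<noteq> {} \<longrightarrow>
                 lower_density {n. (T ^^ n) x \<in> U} > 0}"

end

theory Submission
  imports Defs
begin

text \<open>Fix a common frequently hypercyclic vector \<open>x\<close>. Since \<open>(B\<^sub>w\<^sup>n x)\<^sub>k W\<^sub>k = W\<^sub>k\<^sub>+\<^sub>n x\<^sub>k\<^sub>+\<^sub>n\<close>,
the times \<open>m\<close> with \<open>|W\<^sub>m(j) x\<^sub>m| > 1/2\<close> form a set of positive lower density, while for every \<open>l\<close>
there are arbitrarily large \<open>n\<close> with all coordinates of \<open>B\<^sub>i\<^sup>n x\<close> below \<open>r\<^sub>l\<close>, in particular
\<open>|W\<^sub>m(i) x\<^sub>m| \<le> r\<^sub>l |W\<^sub>m\<^sub>-\<^sub>n(i)|\<close>. Dividing, the \<open>l\<close>-th summand is at most \<open>(2 r\<^sub>l)\<^sup>p\<close>, which is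
summable for \<open>r\<^sub>l\<^sup>p = 2\<^sup>-\<^sup>l\<close>. Positive lower density of the first set puts some \<open>m\<close> into every
window \<open>[n/\<epsilon>', K n/\<epsilon>')\<close> with \<open>n\<close> large, which keeps \<open>n/m\<close> between two positive constants below \<open>\<epsilon>\<close>.\<close>

lemma Wprod_Suc: "Wprod w (Suc n) = Wprod w n * w (Suc n)"
  unfolding Wprod_def by (simp add: prod.nat_ivl_Suc')

lemma bshift_funpow_Wprod: "(bshift w ^^ n) x k * Wprod w k = Wprod w (k + n) * x (k + n)"
proof (induction n arbitrary: x)
  case 0
  then show ?case by simp
next
  case (Suc n)
  have "(bshift w ^^ Suc n) x k = (bshift w ^^ n) (bshift w x) k"
    by (simp only: funpow_Suc_right comp_def)
  then have "(bshift w ^^ Suc n) x k * Wprod w k = Wprod w (k + n) * bshift w x (k + n)"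
    using Suc[of "bshift w x"] by simp
  then show ?case by (simp add: bshift_def[of w x] Wprod_Suc mult_ac del: funpow.simps)
qed

lemma Wprod_quotient_le:
  assumes "n \<le> m"
    and large: "1/2 < norm ((bshift u ^^ m) x 0)"
    and small: "norm ((bshift v ^^ n) x (m - n)) \<le> r"
  shows "norm (Wprod v m) / (norm (Wprod u m) * norm (Wprod v (m - n))) \<le> 2 * r"
proof (cases "Wprod v (m - n) = 0")
  case True
  have "0 \<le> r"
    using small norm_ge_zero order_trans by blast
  with True show ?thesis by simp
next
  case False
  let ?a = "(bshift u ^^ m) x 0" and ?b = "(bshift v ^^ n) x (m - n)"
  have a: "norm ?a = norm (Wprod u m) * norm (x m)"
    using bshift_funpow_Wprod[of m u x 0] by (simp add: Wprod_def norm_mult)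
  have b: "norm ?b * norm (Wprod v (m - n)) = norm (Wprod v m) * norm (x m)"
    using arg_cong[OF bshift_funpow_Wprod[of n v x "m - n"], of norm] \<open>n \<le> m\<close> by (simp add: norm_mult)
  have "x m \<noteq> 0"
    using a large by auto
  then have "norm (Wprod v m) / (norm (Wprod u m) * norm (Wprod v (m - n)))
      = (norm (Wprod v m) * norm (x m)) / (norm (Wprod u m) * norm (x m) * norm (Wprod v (m - n)))"
    by (simp add: mult_ac)
  also have "\<dots> = (norm ?b * norm (Wprod v (m - n))) / (norm ?a * norm (Wprod v (m - n)))"
    using a b by simp
  also have "\<dots> = norm ?b / norm ?a"
    using False by simp
  also have "\<dots> \<le> r / (1/2)"
    using large small by (intro frac_le) (auto intro: order_trans[OF norm_ge_zero])
  finally show ?thesis by simp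
qed

lemma summable_Wprod_quotient_powr:
  assumes "0 < p"
    and "\<And>l. n l \<le> m l"
    and large: "\<And>l. 1/2 < norm ((bshift u ^^ m l) x 0)"
    and small: "\<And>l. norm ((bshift v ^^ n l) x (m l - n l)) \<le> r l"
    and "summable (\<lambda>l. r l powr p)"
  shows "summable (\<lambda>l. norm (Wprod v (m l)) powr p /
    (norm (Wprod u (m l)) powr p * norm (Wprod v (m l - n l)) powr p))"
proof (rule summable_comparison_test[OF _ summable_mult[OF assms(5), of "2 powr p"]])
  have "norm (Wprod v (m l)) powr p / (norm (Wprod u (m l)) powr p * norm (Wprod v (m l - n l)) powr p)
      \<le> 2 powr p * r l powr p" for l
  proof -
    have "(norm (Wprod v (m l)) / (norm (Wprod u (m l)) * norm (Wprod v (m l - n l)))) powr p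
        \<le> (2 * r l) powr p"
      using Wprod_quotient_le[OF assms(2) large small] assms(1) by (intro powr_mono2) auto
    moreover have "0 \<le> r l"
      using small order_trans[OF norm_ge_zero] by blast
    ultimately show ?thesis
      by (simp add: powr_divide powr_mult)
  qed
  then show "\<exists>N. \<forall>l\<ge>N. norm (norm (Wprod v (m l)) powr p /
      (norm (Wprod u (m l)) powr p * norm (Wprod v (m l - n l)) powr p)) \<le> 2 powr p * r l powr p"
    by auto
qed

lemma finite_support_in_lp: "finite {n. x n \<noteq> 0} \<Longrightarrow> x \<in> lp p"
  unfolding lp_def by (intro CollectI summable_finite[of "{n. x n \<noteq> 0}"]) auto

lemma norm_diff_powr_le:
  fixes a b :: "'a::real_normed_vector"
  assumes "0 \<le> p"
  shows "norm (a - b) powr p \<le> 2 powr p * (norm a powr p + norm b powr p)"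
proof -
  have "norm (a - b) powr p \<le> (2 * max (norm a) (norm b)) powr p"
    using norm_triangle_ineq4[of a b] assms by (intro powr_mono2) auto
  also have "\<dots> = 2 powr p * max (norm a) (norm b) powr p"
    by (simp add: powr_mult)
  also have "max (norm a) (norm b) powr p \<le> norm a powr p + norm b powr p"
    by (cases "norm a \<le> norm b") (auto simp: max_def)
  finally show ?thesis
    by (simp add: mult_left_mono)
qed

lemma lp_diff_summable:
  assumes "0 \<le> p" "y \<in> lp p" "z \<in> lp p"
  shows "summable (\<lambda>n. norm (y n - z n) powr p)"
proof (rule summable_comparison_test[where g = "\<lambda>n. 2 powr p * (norm (y n) powr p + norm (z n) powr p)"])
  show "\<exists>N. \<forall>n\<ge>N. norm (norm (y n - z n) powr p) \<le> 2 powr p * (norm (y n) powr p + norm (z n) powr p)"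
    using norm_diff_powr_le[OF assms(1)] by auto
  show "summable (\<lambda>n. 2 powr p * (norm (y n) powr p + norm (z n) powr p))"
    using assms unfolding lp_def by (intro summable_mult summable_add) auto
qed

lemma lp_coord_le_dist:
  assumes "0 < p" "y \<in> lp p" "z \<in> lp p"
  shows "norm (y k - z k) \<le> lp_dist p y z"
proof -
  let ?f = "\<lambda>n. norm (y n - z n) powr p"
  have "summable ?f"
    using lp_diff_summable assms by auto
  then have "sum ?f {k} \<le> suminf ?f"
    by (rule sum_le_suminf) auto
  then have "?f k powr (1/p) \<le> suminf ?f powr (1/p)"
    using assms(1) by (intro powr_mono2) auto
  moreover have "norm (y k - z k) = ?f k powr (1/p)"
    using assms(1) by (simp add: powr_powr)
  ultimately show ?thesis
    unfolding lp_dist_def lp_norm_def by simp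
qed

lemma lp_open_sup_lt:
  assumes "0 < p"
  shows "lp_open p {y \<in> lp p. \<exists>s<r. \<forall>k. norm (y k) \<le> s}" (is "lp_open p ?U")
  unfolding lp_open_def
proof (intro conjI ballI)
  fix y assume "y \<in> ?U"
  then obtain s where y: "y \<in> lp p" "s < r" "\<And>k. norm (y k) \<le> s" by auto
  have "z \<in> ?U" if z: "z \<in> lp p" "lp_dist p y z < r - s" for z
  proof -
    have "norm (z k) \<le> s + lp_dist p y z" for k
      using norm_triangle_ineq2[of "z k" "y k"] lp_coord_le_dist[OF assms y(1) z(1), of k] y(3)[of k]
      by (simp add: norm_minus_commute)
    then show ?thesis using z by (intro CollectI conjI exI[of _ "s + lp_dist p y z"]) auto
  qed
  then show "\<exists>e>0. \<forall>z\<in>lp p. lp_dist p y z < e \<longrightarrow> z \<in> ?U"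
    using y(2) by (intro exI[of _ "r - s"]) auto
qed auto

lemma lp_open_coord_gt:
  assumes "0 < p"
  shows "lp_open p {y \<in> lp p. t < norm (y k)}" (is "lp_open p ?U")
  unfolding lp_open_def
proof (intro conjI ballI)
  fix y assume y: "y \<in> ?U"
  have "z \<in> ?U" if z: "z \<in> lp p" "lp_dist p y z < norm (y k) - t" for z
    using norm_triangle_ineq2[of "y k" "z k"] lp_coord_le_dist[OF assms _ z(1), of y k] y z by auto
  then show "\<exists>e>0. \<forall>z\<in>lp p. lp_dist p y z < e \<longrightarrow> z \<in> ?U"
    using y by (intro exI[of _ "norm (y k) - t"]) auto
qed auto

lemma lower_density_pos_imp_card_gt:
  assumes "lower_density A > 0"
  obtains \<delta> N0 where "0 < \<delta>" "\<And>N. N0 \<le> N \<Longrightarrow> \<delta> * real N < real (card (A \<inter> {..<N}))"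
proof -
  obtain d where d: "0 < ereal d" "ereal d < lower_density A"
    using assms ereal_dense2 by blast
  have "eventually (\<lambda>N. ereal d < ereal (real (card (A \<inter> {..<N})) / real N)) sequentially"
    using d(2) unfolding lower_density_def by (rule less_LiminfD)
  moreover have "eventually (\<lambda>N. (1::nat) \<le> N) sequentially"
    by (rule eventually_ge_at_top)
  ultimately have "eventually (\<lambda>N. d * real N < real (card (A \<inter> {..<N}))) sequentially"
    by eventually_elim (auto simp: field_simps)
  then obtain N0 where "\<And>N. N0 \<le> N \<Longrightarrow> d * real N < real (card (A \<inter> {..<N}))"
    unfolding eventually_sequentially by blast
  with d(1) show ?thesis by (intro that) auto
qed

lemma lower_density_pos_imp_infinite:
  assumes "lower_density A > 0"
  shows "infinite A"
proof
  assume "finite A"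
  obtain \<delta> N0 where \<delta>: "0 < \<delta>" "\<And>N. N0 \<le> N \<Longrightarrow> \<delta> * real N < real (card (A \<inter> {..<N}))"
    using lower_density_pos_imp_card_gt[OF assms] by blast
  define N where "N = max N0 (nat \<lceil>card A / \<delta>\<rceil>)"
  have "real (card A) / \<delta> \<le> real N"
    unfolding N_def by linarith
  then have "real (card A) \<le> \<delta> * real N"
    using \<delta>(1) by (simp add: field_simps)
  moreover have "card (A \<inter> {..<N}) \<le> card A"
    using \<open>finite A\<close> by (intro card_mono) auto
  ultimately show False
    using \<delta>(2)[of N] unfolding N_def by linarith
qed

lemma card_inter_lessThan_gt_imp_mem:
  assumes "\<delta> * real N < real (card (A \<inter> {..<N}))" "real a \<le> \<delta> * real N"
  shows "\<exists>m\<in>A. a \<le> m \<and> m < N"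
proof (rule ccontr)
  assume "\<not> ?thesis"
  then have "A \<inter> {..<N} \<subseteq> {..<a}" by auto
  then have "card (A \<inter> {..<N}) \<le> a"
    using card_mono[of "{..<a}"] by fastforce
  then show False using assms by linarith
qed

lemma lower_density_pos_imp_mem_between_mult:
  assumes "lower_density A > 0"
  obtains K N0 :: nat where "0 < K" "\<And>a. N0 \<le> a \<Longrightarrow> \<exists>m\<in>A. a \<le> m \<and> m < K * a"
proof -
  obtain \<delta> N0 where \<delta>: "0 < \<delta>" "\<And>N. N0 \<le> N \<Longrightarrow> \<delta> * real N < real (card (A \<inter> {..<N}))"
    using lower_density_pos_imp_card_gt[OF assms] by blast
  define K :: nat where "K = nat \<lceil>1 / \<delta>\<rceil>"
  have "1 / \<delta> \<le> real K"
    unfolding K_def by linarith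
  then have K: "1 \<le> \<delta> * real K"
    using \<delta>(1) by (simp add: field_simps)
  then have "0 < K"
    by (cases "K = 0") auto
  have "\<exists>m\<in>A. a \<le> m \<and> m < K * a" if a: "max N0 1 \<le> a" for a
  proof (rule card_inter_lessThan_gt_imp_mem)
    have "N0 \<le> a" "a \<le> K * a"
      using a \<open>0 < K\<close> by simp_all
    then show "\<delta> * real (K * a) < real (card (A \<inter> {..<K * a}))"
      by (intro \<delta>(2)) (rule le_trans)
    show "real a \<le> \<delta> * real (K * a)"
      using mult_left_mono[OF K, of "real a"] by (simp add: mult_ac)
  qed
  with \<open>0 < K\<close> show ?thesis
    using that[of K "max N0 1"] by blast
qed

lemma lower_density_pos_imp_ratio_window:
  fixes \<epsilon> :: real
  assumes "lower_density A > 0" "0 < \<epsilon>" "\<epsilon> \<le> 1"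
  obtains c N0 where "0 < c"
    "\<And>n. N0 \<le> n \<Longrightarrow> \<exists>m\<in>A. 0 < m \<and> c \<le> real n / real m \<and> real n / real m \<le> \<epsilon>"
proof -
  obtain K N0 where "0 < K" and between: "\<And>a. N0 \<le> a \<Longrightarrow> \<exists>m\<in>A. a \<le> m \<and> m < K * a"
    using lower_density_pos_imp_mem_between_mult[OF assms(1)] by blast
  define c where "c = \<epsilon> / (2 * real K)"
  have "\<exists>m\<in>A. 0 < m \<and> c \<le> real n / real m \<and> real n / real m \<le> \<epsilon>" if n: "max N0 1 \<le> n" for n
  proof -
    define a where "a = nat \<lceil>real n / \<epsilon>\<rceil>"
    have "real a = of_int \<lceil>real n / \<epsilon>\<rceil>"
      unfolding a_def using assms(2) by simp
    then have a: "real n / \<epsilon> \<le> real a" "real a < real n / \<epsilon> + 1"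
      by linarith+
    have "real n \<le> real n / \<epsilon>"
      using assms(2,3) by (simp add: field_simps mult_left_le_one_le)
    then have "n \<le> a"
      using a(1) by simp
    then have "N0 \<le> a"
      using n by simp
    then obtain m where m: "m \<in> A" "a \<le> m" "m < K * a"
      using between by blast
    have "0 < real n" "0 < real m"
      using n m \<open>n \<le> a\<close> by auto
    have "real n / real m \<le> real n / (real n / \<epsilon>)"
      using a(1) m(2) \<open>0 < real n\<close> \<open>0 < real m\<close> assms(2) by (intro divide_left_mono) auto
    also have "\<dots> = \<epsilon>"
      using \<open>0 < real n\<close> by simp
    finally have upper: "real n / real m \<le> \<epsilon>" .
    have "real m < real K * real a"
      using m(3) by (metis of_nat_less_iff of_nat_mult)
    also have "\<dots> < real K * (real n / \<epsilon> + 1)"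
      using a(2) \<open>0 < K\<close> by simp
    also have "\<dots> \<le> real K * (2 * real n / \<epsilon>)"
      using \<open>real n \<le> real n / \<epsilon>\<close> \<open>0 < real n\<close> by (intro mult_left_mono) auto
    finally have "c \<le> real n / real m"
      using \<open>0 < real m\<close> \<open>0 < K\<close> assms(2) unfolding c_def by (simp add: field_simps)
    with upper m \<open>0 < real m\<close> show ?thesis by auto
  qed
  moreover have "0 < c"
    unfolding c_def using assms(2) \<open>0 < K\<close> by simp
  ultimately show ?thesis
    using that by blast
qed

lemma FHC_lower_density_pos:
  "x \<in> FHC p T \<Longrightarrow> lp_open p U \<Longrightarrow> y \<in> U \<Longrightarrow> lower_density {n. (T ^^ n) x \<in> U} > 0"
  unfolding FHC_def by blast

lemma FHC_infinite_sup_lt: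
  assumes "0 < p" "x \<in> FHC p T" "0 < r"
  shows "infinite {n. (T ^^ n) x \<in> lp p \<and> (\<exists>s<r. \<forall>k. norm ((T ^^ n) x k) \<le> s)}"
proof -
  have "(\<lambda>_. 0) \<in> {y \<in> lp p. \<exists>s<r. \<forall>k. norm (y k) \<le> s}"
    using finite_support_in_lp[of "\<lambda>_. 0"] assms(3) by force
  then have "lower_density {n. (T ^^ n) x \<in> {y \<in> lp p. \<exists>s<r. \<forall>k. norm (y k) \<le> s}} > 0"
    by (rule FHC_lower_density_pos[OF assms(2) lp_open_sup_lt[OF assms(1)]])
  then show ?thesis
    using lower_density_pos_imp_infinite by simp
qed

lemma FHC_lower_density_coord_gt:
  assumes "0 < p" "x \<in> FHC p T"
  shows "lower_density {m. (T ^^ m) x \<in> lp p \<and> t < norm ((T ^^ m) x k)} > 0"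
proof -
  have "(\<lambda>i. if i = k then of_real (\<bar>t\<bar> + 1) else 0) \<in> {y \<in> lp p. t < norm (y k)}"
    using finite_support_in_lp[of "\<lambda>i. if i = k then of_real (\<bar>t\<bar> + 1) else 0"] by simp
  then have "lower_density {m. (T ^^ m) x \<in> {y \<in> lp p. t < norm (y k)}} > 0"
    by (rule FHC_lower_density_pos[OF assms(2) lp_open_coord_gt[OF assms(1)]])
  then show ?thesis
    by simp
qed

lemma strict_mono_pairs_choice:
  assumes "\<And>l M. \<exists>n m. M \<le> n \<and> n \<le> m \<and> Q l n m"
  obtains n m :: "nat \<Rightarrow> nat"
  where "strict_mono n" "strict_mono m" "\<And>l. n l \<le> m l \<and> Q l (n l) (m l)"
proof -
  have "\<forall>l M. \<exists>q. M \<le> fst q \<and> fst q \<le> snd q \<and> Q l (fst q) (snd q)"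
    using assms by fastforce
  then obtain F where F: "\<And>l M. M \<le> fst (F l M) \<and> fst (F l M) \<le> snd (F l M) \<and> Q l (fst (F l M)) (snd (F l M))"
    by metis
  define s where "s = rec_nat (F 0 0) (\<lambda>l q. F (Suc l) (Suc (snd q)))"
  have s_Suc: "s (Suc l) = F (Suc l) (Suc (snd (s l)))" for l
    unfolding s_def by simp
  have s: "fst (s l) \<le> snd (s l) \<and> Q l (fst (s l)) (snd (s l))" for l
  proof (cases l)
    case 0
    then show ?thesis using F[where l = 0 and M = 0] by (simp add: s_def)
  next
    case (Suc k)
    then show ?thesis using F[where l = l and M = "Suc (snd (s k))"] s_Suc[of k] by simp
  qed
  have step: "snd (s l) < fst (s (Suc l))" for l
    using F[where l = "Suc l" and M = "Suc (snd (s l))"] s_Suc[of l] by simp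
  have "strict_mono (fst \<circ> s)" "strict_mono (snd \<circ> s)"
    by (auto intro!: strict_monoI_Suc le_less_trans[OF conjunct1[OF s] step]
        less_le_trans[OF step conjunct1[OF s]])
  then show ?thesis
    using s that[of "fst \<circ> s" "snd \<circ> s"] by simp
qed

lemma ratio_sequences_in_dense_sets:
  fixes \<epsilon> :: real
  assumes A: "lower_density A > 0" and D: "\<And>l. infinite (D l)"
    and \<epsilon>: "0 < \<epsilon>" "\<epsilon> < 1"
  obtains n m :: "nat \<Rightarrow> nat"
  where "strict_mono n" "strict_mono m" "\<And>l. 0 < n l \<and> n l \<le> m l \<and> n l \<in> D l \<and> m l \<in> A"
    "liminf (\<lambda>l. ereal (real (n l) / real (m l))) > 0"
    "limsup (\<lambda>l. ereal (real (n l) / real (m l))) < ereal \<epsilon>"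
proof -
  obtain c N0 where c: "0 < c"
    and window: "\<And>n. N0 \<le> n \<Longrightarrow> \<exists>m\<in>A. 0 < m \<and> c \<le> real n / real m \<and> real n / real m \<le> \<epsilon> / 2"
    using lower_density_pos_imp_ratio_window[OF A, of "\<epsilon> / 2"] \<epsilon> by auto
  let ?Q = "\<lambda>l n m. 0 < n \<and> n \<in> D l \<and> m \<in> A \<and> c \<le> real n / real m \<and> real n / real m \<le> \<epsilon> / 2"
  have pairs: "\<exists>n m. M \<le> n \<and> n \<le> m \<and> ?Q l n m" for l M
  proof -
    obtain n where n: "n \<in> D l" "max M (max N0 1) \<le> n"
      using D[of l] infinite_nat_iff_unbounded_le by blast
    then obtain m where m: "m \<in> A" "0 < m" "c \<le> real n / real m" "real n / real m \<le> \<epsilon> / 2"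
      using window by auto
    then have "2 * real n \<le> \<epsilon> * real m"
      using \<epsilon> by (simp add: field_simps)
    moreover have "\<epsilon> * real m \<le> real m"
      using \<epsilon> by (simp add: mult_left_le_one_le)
    ultimately have "n \<le> m"
      by simp
    with n m show ?thesis
      by (intro exI[of _ n] exI[of _ m]) auto
  qed
  obtain n m where nm: "strict_mono n" "strict_mono m" "\<And>l. n l \<le> m l \<and> ?Q l (n l) (m l)"
    by (rule strict_mono_pairs_choice[of ?Q, OF pairs]) blast
  have "ereal c \<le> liminf (\<lambda>l. ereal (real (n l) / real (m l)))"
    using nm(3) by (intro Liminf_bounded) auto
  then have "liminf (\<lambda>l. ereal (real (n l) / real (m l))) > 0"
    using c by (meson ereal_less(2) less_le_trans)
  moreover have "limsup (\<lambda>l. ereal (real (n l) / real (m l))) \<le> ereal (\<epsilon> / 2)"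
    using nm(3) by (intro Limsup_bounded) auto
  then have "limsup (\<lambda>l. ereal (real (n l) / real (m l))) < ereal \<epsilon>"
    using \<epsilon> by (simp add: le_less_trans)
  ultimately show ?thesis
    using nm by (intro that) auto
qed

theorem theorem4p10:
  fixes p :: real and w :: "nat \<Rightarrow> nat \<Rightarrow> complex"
  assumes p: "1 \<le> p"
    and weights: "\<And>k. k \<ge> 1 \<Longrightarrow> is_weight (w k)"
    and fhc: "\<And>k. k \<ge> 1 \<Longrightarrow> FHC p (bshift (w k)) \<noteq> {}"
    and common: "(\<Inter>k\<in>{1..}. FHC p (bshift (w k))) \<noteq> {}"
    and ij: "i \<ge> 1" "j \<ge> 1" "i \<noteq> j"
    and eps: "0 < \<epsilon>" "\<epsilon> < 1"
  shows "\<exists>m n :: nat \<Rightarrow> nat.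
           strict_mono m \<and> strict_mono n \<and> (\<forall>l. 0 < m l \<and> 0 < n l \<and> n l \<le> m l) \<and>
           filterlim m at_top sequentially \<and> filterlim n at_top sequentially \<and>
           liminf (\<lambda>l. ereal (real (n l) / real (m l))) > 0 \<and>
           limsup (\<lambda>l. ereal (real (n l) / real (m l))) < ereal \<epsilon> \<and>
           summable (\<lambda>l. norm (Wprod (w i) (m l)) powr p /
              (norm (Wprod (w j) (m l)) powr p * norm (Wprod (w i) (m l - n l)) powr p))"
proof -
  have "0 < p" using p by simp
  obtain x where xi: "x \<in> FHC p (bshift (w i))" and xj: "x \<in> FHC p (bshift (w j))"
    using common ij by blast
  define r :: "nat \<Rightarrow> real" where "r l = (1/2) powr (real l / p)" for l
  define D where "D l = {n. (bshift (w i) ^^ n) x \<in> lp p \<and> (\<exists>s<r l. \<forall>k. norm ((bshift (w i) ^^ n) x k) \<le> s)}"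
    for l
  have "infinite (D l)" for l
    unfolding D_def r_def by (intro FHC_infinite_sup_lt[OF \<open>0 < p\<close> xi]) simp
  then obtain n m where nm: "strict_mono n" "strict_mono m"
    and in_sets: "\<And>l. 0 < n l \<and> n l \<le> m l \<and> n l \<in> D l
      \<and> m l \<in> {m. (bshift (w j) ^^ m) x \<in> lp p \<and> 1/2 < norm ((bshift (w j) ^^ m) x 0)}"
    and ratio: "liminf (\<lambda>l. ereal (real (n l) / real (m l))) > 0"
      "limsup (\<lambda>l. ereal (real (n l) / real (m l))) < ereal \<epsilon>"
    by (rule ratio_sequences_in_dense_sets[where D = D,
          OF FHC_lower_density_coord_gt[where t = "1/2" and k = 0, OF \<open>0 < p\<close> xj] _ eps]) blast
  have "norm ((bshift (w i) ^^ n l) x (m l - n l)) \<le> r l" for l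
    using in_sets[of l] unfolding D_def by (auto intro: order_trans less_imp_le)
  moreover have "summable (\<lambda>l. r l powr p)"
    using \<open>0 < p\<close> by (simp add: r_def powr_powr powr_realpow)
  ultimately have "summable (\<lambda>l. norm (Wprod (w i) (m l)) powr p /
      (norm (Wprod (w j) (m l)) powr p * norm (Wprod (w i) (m l - n l)) powr p))"
    using in_sets by (intro summable_Wprod_quotient_powr[OF \<open>0 < p\<close>, where x = x]) auto
  with nm in_sets ratio show ?thesis
    by (intro exI[of _ m] exI[of _ n]) (auto simp: filterlim_subseq intro: less_le_trans)
qed

end
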